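(* Let solutions $\psi_n$ of the KG equation concentrate at the trajectory $\hat{\mathbf r}$. Then the adjacent ergocenters $\mathbf r_n(t)$ of the solutions converge to $\hat{\mathbf r}(t)$ uniformly on $[T_-,T_+]$.
   Context: Fix constants $c>0$, $m>0$ and a real charge $q$. For parameters $\chi>0$, $a>0$ and a real electric potential $\varphi(t,\mathbf x)$, the KG equation is $-c^{-2}\tilde\partial_t^2\psi+\Delta\psi-G_a'(|\psi|^2)\psi-\kappa_0^2\psi=0$, $\tilde\partial_t=\partial_t+\mathrm i q\varphi/\chi$, $\kappa_0=mc/\chi$, with $G_a(s)=a^{-5}G_1(a^3s)$, where $G_1(0)=0$, $G_1'\in C^1((0,\infty))$, $\psi\mapsto G_1'(|\psi|^2)\psi$ extends to a $C^\alpha(\mathbb C)$ function and $\psi\mapsto G_1(|\psi|^2)$ is $C^{1+\alpha}(\mathbb C)$ for every $\alpha\in(0,1)$, with $|G_1(|\psi|^2)|\le C|\psi|^{1+\alpha}$, $|G_1'(|\psi|^2)||\psi|\le C|\psi|^\alpha$ for bounded $|\psi|$. $a_C=\chi/(mc)$. Energy density $\mathcal E=\frac{\chi^2}{2m}[c^{-2}|\tilde\partial_t\psi|^2+|\nabla\psi|^2+G_a(|\psi|^2)+\kappa_0^2|\psi|^2]$. $\nabla_{0,\mathbf x}=(c^{-1}\partial_t,\partial_1,\partial_2,\partial_3)$. Trajectory: $\hat{\mathbf r}\in C^2([T_-,T_+];\mathbb R^3)$ with $|\partial_t\hat{\mathbf r}|,|\partial_t^2\hat{\mathbf r}|\le C$;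 $R_n\to0$; $\Omega_n(t)=\{|\mathbf x-\hat{\mathbf r}(t)|\le R_n\}$, $\hat\Omega_n=\{(t,\mathbf x):t\in[T_-,T_+],\mathbf x\in\Omega_n(t)\}$. Localized KG equations: $a_n\to0$, $\chi_n\to0$, $a_{C,n}/a_n\le C$, $R_n/a_n\to\infty$; $\varphi_n\in C^2(\hat\Omega_n)$ with $\sup_{\hat\Omega_n}(|\varphi_n|+|\nabla_{0,\mathbf x}\varphi_n|)\le C$; a limit $\varphi_\infty(t,\mathbf x)=\varphi_\infty(t,\hat{\mathbf r}(t))+(\mathbf x-\hat{\mathbf r}(t))\cdot\nabla\varphi_\infty(t)$ with $\sup_{\hat\Omega_n}(|\varphi_n-\varphi_\infty|+|\nabla_{0,\mathbf x}(\varphi_n-\varphi_\infty)|)\to0$ and $|\varphi_\infty(t,\hat{\mathbf r}(t))|,|\nabla\varphi_\infty(t)|,|\partial_t\nabla\varphi_\infty(t)|\le C$. Concentrating solutions: $\psi_n\in C^2(\hat\Omega_n)$ solving KG with $(\chi_n,a_n,\varphi_n)$ in $\hat\Omega_n$ such that (i) $\max_t\int_{\Omega_n(t)}[a_C^2|\nabla_{0,\mathbf x}\psi_n|^2+a_C^2|G_a(|\psi_n|^2)|+|\psi_n|^2]d^3x\le C$; (ii) $\max_t\int_{\partial\Omega_n(t)}[\text{same integrand}]d^2\sigma\to0$; (iii) $\bar{\mathcal E}_n(t)=\int_{\Omega_n(t)}\mathcal E_nd^3x\ge c_0>0$ for $n\ge n_0$; (iv) $\bar{\mathcal E}_n(t_0)$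 converges for some $t_0$. Adjacent ergocenter: $\mathbf r_n(t)=\bar{\mathcal E}_n(t)^{-1}\int_{\Omega_n(t)}\mathbf x\,\mathcal E_n\,d^3x$. *)

theory Defs
  imports "HOL-Analysis.Analysis"
begin

type_synonym pt = "real \<times> (real^3)"   (* spacetime point (t, x) *)

definition dd :: "('a::real_normed_vector \<Rightarrow> 'b::real_normed_vector) \<Rightarrow> 'a \<Rightarrow> 'a \<Rightarrow> 'b" where
  "dd F v p = vector_derivative (\<lambda>s. F (p + s *\<^sub>R v)) (at 0)"

definition C2_on :: "'a::euclidean_space set \<Rightarrow> ('a \<Rightarrow> 'b::real_normed_vector) \<Rightarrow> bool" where
  "C2_on U F \<longleftrightarrow> open U \<and> continuous_on U F
     \<and> (\<forall>v\<in>Basis. \<forall>p\<in>U. (\<lambda>s. F (p + s *\<^sub>R v)) differentiable (at 0))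
     \<and> (\<forall>v\<in>Basis. continuous_on U (dd F v))
     \<and> (\<forall>v\<in>Basis. \<forall>w\<in>Basis. \<forall>p\<in>U. (\<lambda>s. dd F v (p + s *\<^sub>R w)) differentiable (at 0))
     \<and> (\<forall>v\<in>Basis. \<forall>w\<in>Basis. continuous_on U (dd (dd F v) w))"

definition C2_set :: "'a::euclidean_space set \<Rightarrow> ('a \<Rightarrow> 'b::real_normed_vector) \<Rightarrow> bool" where
  "C2_set S F \<longleftrightarrow> (\<exists>U. S \<subseteq> U \<and> C2_on U F)"

text \<open>Time derivative, taken within the time interval I (one-sided at the end points).\<close>
definition dt :: "real set \<Rightarrow> (pt \<Rightarrow> 'b::real_normed_vector) \<Rightarrow> pt \<Rightarrow> 'b" where
  "dt I F p = vector_derivative (\<lambda>s. F (s, snd p)) (at (fst p) within I)"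

definition dx :: "3 \<Rightarrow> (pt \<Rightarrow> 'b::real_normed_vector) \<Rightarrow> pt \<Rightarrow> 'b" where
  "dx i F p = vector_derivative (\<lambda>s. F (fst p, snd p + s *\<^sub>R axis i 1)) (at 0)"

definition lap :: "(pt \<Rightarrow> 'b::real_normed_vector) \<Rightarrow> pt \<Rightarrow> 'b" where
  "lap F p = (\<Sum>i\<in>UNIV. dx i (dx i F) p)"

definition grad0_sq :: "real \<Rightarrow> real set \<Rightarrow> (pt \<Rightarrow> 'b::real_normed_vector) \<Rightarrow> pt \<Rightarrow> real" where
  "grad0_sq c I F p = (norm (dt I F p) / c)^2 + (\<Sum>i\<in>UNIV. (norm (dx i F p))^2)"

definition grad0_norm :: "real \<Rightarrow> real set \<Rightarrow> (pt \<Rightarrow> 'b::real_normed_vector) \<Rightarrow> pt \<Rightarrow> real" where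
  "grad0_norm c I F p = sqrt (grad0_sq c I F p)"

definition tD :: "real set \<Rightarrow> real \<Rightarrow> real \<Rightarrow> (pt \<Rightarrow> real) \<Rightarrow> (pt \<Rightarrow> complex) \<Rightarrow> pt \<Rightarrow> complex" where
  "tD I q chi phi F p = dt I F p + \<i> * complex_of_real (q * phi p / chi) * F p"

definition Ga :: "real \<Rightarrow> (real \<Rightarrow> real) \<Rightarrow> real \<Rightarrow> real" where
  "Ga a G1 s = G1 (a^3 * s) / a^5"

definition holder_loc :: "real \<Rightarrow> ('a::real_normed_vector \<Rightarrow> 'b::real_normed_vector) \<Rightarrow> bool" where
  "holder_loc al h \<longleftrightarrow> (\<forall>K. \<exists>L. \<forall>z w. norm z \<le> K \<longrightarrow> norm w \<le> K \<longrightarrow>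
       norm (h z - h w) \<le> L * norm (z - w) powr al)"

definition admissible_G1 :: "(real \<Rightarrow> real) \<Rightarrow> bool" where
  "admissible_G1 G1 \<longleftrightarrow>
     G1 0 = 0
   \<and> (\<forall>s>0. (G1 has_real_derivative deriv G1 s) (at s))
   \<and> (\<forall>s>0. (deriv G1 has_real_derivative deriv (deriv G1) s) (at s))
   \<and> continuous_on {0<..} (deriv (deriv G1))
   \<and> (\<forall>al. 0 < al \<and> al < 1 \<longrightarrow>
        (\<exists>h::complex \<Rightarrow> complex. (\<forall>z. z \<noteq> 0 \<longrightarrow> h z = complex_of_real (deriv G1 ((cmod z)^2)) * z)
                                  \<and> holder_loc al h)
      \<and> (\<exists>D::complex \<Rightarrow> complex \<Rightarrow> real.
           (\<forall>z. ((\<lambda>w. G1 ((cmod w)^2)) has_derivative D z) (at z))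
         \<and> (\<forall>K. \<exists>L. \<forall>z w u. cmod z \<le> K \<longrightarrow> cmod w \<le> K \<longrightarrow>
                 \<bar>D z u - D w u\<bar> \<le> L * cmod (z - w) powr al * cmod u))
      \<and> (\<forall>K. \<exists>L. \<forall>z. cmod z \<le> K \<longrightarrow>
              \<bar>G1 ((cmod z)^2)\<bar> \<le> L * cmod z powr (1 + al)
            \<and> \<bar>deriv G1 ((cmod z)^2)\<bar> * cmod z \<le> L * cmod z powr al))"

definition KG_lhs :: "real \<Rightarrow> real \<Rightarrow> real \<Rightarrow> (real \<Rightarrow> real) \<Rightarrow> real set \<Rightarrow> real \<Rightarrow> real
    \<Rightarrow> (pt \<Rightarrow> real) \<Rightarrow> (pt \<Rightarrow> complex) \<Rightarrow> pt \<Rightarrow> complex" where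
  "KG_lhs c m q G1 I chi a phi psi p =
     - tD I q chi phi (tD I q chi phi psi) p / complex_of_real (c^2)
     + lap psi p
     - complex_of_real (deriv (Ga a G1) ((cmod (psi p))^2)) * psi p
     - complex_of_real ((m * c / chi)^2) * psi p"

definition energy :: "real \<Rightarrow> real \<Rightarrow> real \<Rightarrow> (real \<Rightarrow> real) \<Rightarrow> real set \<Rightarrow> real \<Rightarrow> real
    \<Rightarrow> (pt \<Rightarrow> real) \<Rightarrow> (pt \<Rightarrow> complex) \<Rightarrow> pt \<Rightarrow> real" where
  "energy c m q G1 I chi a phi psi p =
     chi^2 / (2 * m) *
       ((cmod (tD I q chi phi psi p))^2 / c^2
        + (\<Sum>i\<in>UNIV. (cmod (dx i psi p))^2)
        + Ga a G1 ((cmod (psi p))^2)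
        + (m * c / chi)^2 * (cmod (psi p))^2)"

definition sph :: "real \<Rightarrow> real \<Rightarrow> real^3" where
  "sph th ph = vector [sin th * cos ph, sin th * sin ph, cos th]"

definition sphere_integral :: "real^3 \<Rightarrow> real \<Rightarrow> (real^3 \<Rightarrow> real) \<Rightarrow> real" where
  "sphere_integral x0 R f =
     integral ({0..pi} \<times> {0..2*pi}) (\<lambda>(th, ph). R^2 * sin th * f (x0 + R *\<^sub>R sph th ph))"

end

theory Submission
  imports Defs
begin

text \<open>
  The difference \<open>r\<^sub>n(t) - rhat(t)\<close> is the energy-weighted mean of \<open>x - rhat(t)\<close> over the ball
  \<open>\<Omega>\<^sub>n(t)\<close>, whose points lie within \<open>R\<^sub>n\<close> of \<open>rhat(t)\<close>. Since \<open>|\<phi>\<^sub>n| \<le> C\<close>, the energy density is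
  dominated pointwise by a fixed multiple \<open>K\<close> of the integrand of condition (i), so the integral of
  its absolute value over \<open>\<Omega>\<^sub>n(t)\<close> is at most \<open>K C\<close>, while the total energy is at least \<open>c\<^sub>0\<close>. Hence
  \<open>|r\<^sub>n(t) - rhat(t)| \<le> K C R\<^sub>n / c\<^sub>0\<close> uniformly in \<open>t\<close>, and \<open>R\<^sub>n \<rightarrow> 0\<close>.
\<close>

lemma continuous_on_compact_integrable:
  fixes f :: "'a::euclidean_space \<Rightarrow> 'b::euclidean_space"
  assumes "compact S" "continuous_on S f"
  shows "f integrable_on S"
  using set_borel_integral_eq_integral(1)[OF borel_integrable_compact[OF assms, folded set_integrable_def]] .

lemma dist_weighted_mean_le:
  fixes f w :: "'a::euclidean_space \<Rightarrow> real" and r :: 'a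
  assumes f: "f integrable_on S" and fx: "(\<lambda>x. f x *\<^sub>R x) integrable_on S"
    and w: "w integrable_on S"
    and f_w: "\<And>x. x \<in> S \<Longrightarrow> \<bar>f x\<bar> \<le> w x"
    and S_r: "\<And>x. x \<in> S \<Longrightarrow> dist x r \<le> \<rho>" and \<rho>: "0 \<le> \<rho>"
    and c0: "0 < c0" "c0 \<le> integral S f" and B: "integral S w \<le> B"
  shows "dist ((1 / integral S f) *\<^sub>R integral S (\<lambda>x. f x *\<^sub>R x)) r \<le> \<rho> * B / c0"
proof -
  have fr: "(\<lambda>x. f x *\<^sub>R (x - r)) integrable_on S"
    using integrable_diff[OF fx integrable_on_scaleR_left[OF f, of r]] by (simp add: scaleR_diff_right)
  have shift: "integral S (\<lambda>x. f x *\<^sub>R x) - integral S f *\<^sub>R r = integral S (\<lambda>x. f x *\<^sub>R (x - r))"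
    using integral_diff[OF fx integrable_on_scaleR_left[OF f, of r]]
      integral_unique[OF has_integral_scaleR_left[OF integrable_integral[OF f], of r]]
    by (simp add: scaleR_diff_right)
  have "norm (integral S (\<lambda>x. f x *\<^sub>R (x - r))) \<le> integral S (\<lambda>x. \<rho> * w x)"
  proof (rule integral_norm_bound_integral[OF fr integrable_cmul[OF w, of \<rho>, simplified]])
    fix x assume "x \<in> S"
    then have "\<bar>f x\<bar> * norm (x - r) \<le> w x * \<rho>"
      using f_w S_r[of x] \<rho> by (intro mult_mono) (auto simp: dist_norm intro: order_trans[OF abs_ge_zero])
    then show "norm (f x *\<^sub>R (x - r)) \<le> \<rho> * w x"
      by (simp add: mult.commute)
  qed
  also have "\<dots> \<le> \<rho> * B" using B \<rho> by (simp add: mult_left_mono)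
  finally have num: "norm (integral S (\<lambda>x. f x *\<^sub>R (x - r))) \<le> \<rho> * B" .
  have pos: "0 < integral S f" using c0 by linarith
  have "dist ((1 / integral S f) *\<^sub>R integral S (\<lambda>x. f x *\<^sub>R x)) r
      = norm (integral S (\<lambda>x. f x *\<^sub>R (x - r))) / integral S f"
  proof -
    have "(1 / integral S f) *\<^sub>R integral S (\<lambda>x. f x *\<^sub>R x) - r
        = (1 / integral S f) *\<^sub>R (integral S (\<lambda>x. f x *\<^sub>R x) - integral S f *\<^sub>R r)"
      using pos by (simp add: scaleR_diff_right)
    then show ?thesis
      using pos by (simp add: dist_norm shift)
  qed
  also have "\<dots> \<le> \<rho> * B / c0"
    using num c0 by (intro frac_le) (auto intro: order_trans[OF norm_ge_zero])
  finally show ?thesis .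
qed

lemma uniform_limit_of_dist_le_null:
  assumes "\<forall>\<^sub>F n in F. \<forall>t\<in>S. dist (f n t) (l t) \<le> M * r n" and "(r \<longlongrightarrow> 0) F"
  shows "uniform_limit S f l F"
proof (rule metric_uniform_limit_imp_uniform_limit)
  show "uniform_limit S (\<lambda>n _. M * r n) (\<lambda>_. 0) F"
    using tendsto_mult_right_zero[OF assms(2), of M] by (auto simp: uniform_limit_iff tendsto_iff)
  show "\<forall>\<^sub>F n in F. \<forall>t\<in>S. dist (f n t) (l t) \<le> dist (M * r n) 0"
    using assms(1) by eventually_elim auto
qed

text \<open>The integrand of condition (i); the parameter \<open>aC\<close> stands for \<open>a\<^sub>C = \<chi>/(m c)\<close>.\<close>
definition control_density :: "real \<Rightarrow> real set \<Rightarrow> real \<Rightarrow> real \<Rightarrow> (real \<Rightarrow> real)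
    \<Rightarrow> (pt \<Rightarrow> complex) \<Rightarrow> pt \<Rightarrow> real" where
  "control_density c I aC a G1 psi p =
     aC^2 * grad0_sq c I psi p + aC^2 * \<bar>Ga a G1 ((cmod (psi p))^2)\<bar> + (cmod (psi p))^2"

lemma norm_tD_sq_le:
  "(cmod (tD I q chi phi psi p))^2
     \<le> 2 * (cmod (dt I psi p))^2 + 2 * (q * phi p / chi)^2 * (cmod (psi p))^2"
proof -
  let ?u = "cmod (dt I psi p)" and ?v = "\<bar>q * phi p / chi\<bar> * cmod (psi p)"
  have "cmod (tD I q chi phi psi p) \<le> ?u + ?v"
    unfolding tD_def by (rule order_trans[OF norm_triangle_ineq]) (simp add: norm_mult norm_divide abs_mult)
  then have "(cmod (tD I q chi phi psi p))^2 \<le> (?u + ?v)^2"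
    by (simp add: power_mono)
  also have "\<dots> \<le> 2 * ?u^2 + 2 * ?v^2"
    using zero_le_power2[of "?u - ?v"] by (simp only: power2_diff power2_sum)
  finally show ?thesis by (simp add: power_mult_distrib power_divide)
qed

lemma kinetic_term_le:
  assumes chi: "0 < chi" and m: "0 < m" and c: "0 < c" and phi: "\<bar>phi p\<bar> \<le> C"
  shows "chi^2 / (2 * m) * ((cmod (tD I q chi phi psi p))^2 / c^2)
           \<le> m * c^2 * ((chi / (m * c))^2 * ((cmod (dt I psi p))^2 / c^2))
             + (q * C)^2 / (m * c^2) * (cmod (psi p))^2"
proof -
  have "chi^2 * (q * phi p / chi)^2 = (q * phi p)^2"
    using chi by (simp add: field_simps power2_eq_square)
  also have "\<dots> \<le> (q * C)^2"
    using phi by (simp add: power_mult_distrib mult_left_mono abs_le_square_iff[symmetric])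
  finally have charge: "chi^2 * (q * phi p / chi)^2 \<le> (q * C)^2" .
  have "chi^2 / (2 * m) * ((cmod (tD I q chi phi psi p))^2 / c^2)
      \<le> chi^2 / (2 * m) * ((2 * (cmod (dt I psi p))^2 + 2 * (q * phi p / chi)^2 * (cmod (psi p))^2) / c^2)"
    using norm_tD_sq_le[of I q chi phi psi p] chi m c
    by (intro mult_left_mono divide_right_mono) auto
  also have "\<dots> = m * c^2 * ((chi / (m * c))^2 * ((cmod (dt I psi p))^2 / c^2))
      + chi^2 * (q * phi p / chi)^2 / (m * c^2) * (cmod (psi p))^2"
    using m c chi by (simp add: field_simps power2_eq_square)
  also have "\<dots> \<le> m * c^2 * ((chi / (m * c))^2 * ((cmod (dt I psi p))^2 / c^2))
      + (q * C)^2 / (m * c^2) * (cmod (psi p))^2"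
    using charge m c by (intro add_left_mono divide_right_mono mult_right_mono) auto
  finally show ?thesis .
qed

lemma abs_energy_le_control_density:
  assumes chi: "0 < chi" and m: "0 < m" and c: "0 < c" and phi: "\<bar>phi p\<bar> \<le> C"
  shows "\<bar>energy c m q G1 I chi a phi psi p\<bar>
           \<le> (m * c^2 + (q * C)^2 / (m * c^2)) * control_density c I (chi / (m * c)) a G1 psi p"
proof -
  define A where "A = (chi / (m * c))^2"
  define D where "D = (cmod (dt I psi p))^2"
  define S where "S = (\<Sum>i\<in>UNIV. (cmod (dx i psi p))^2)"
  define G where "G = Ga a G1 ((cmod (psi p))^2)"
  define w where "w = (cmod (psi p))^2"
  have A0: "0 \<le> A" and S0: "0 \<le> S" and D0: "0 \<le> D" and w0: "0 \<le> w"
    by (simp_all add: A_def S_def D_def w_def sum_nonneg)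
  have pref: "chi^2 / (2 * m) = m * c^2 / 2 * A" and kappa: "A * (m * c / chi)^2 = 1"
    using chi m c by (simp_all add: A_def field_simps power2_eq_square)
  have expand: "energy c m q G1 I chi a phi psi p
      = chi^2 / (2 * m) * ((cmod (tD I q chi phi psi p))^2 / c^2) + m * c^2 / 2 * (A * S + A * G + w)"
    unfolding energy_def pref G_def S_def w_def
    by (simp add: distrib_left mult.assoc[symmetric] kappa flip: mult.assoc)
  have potential: "\<bar>A * S + A * G + w\<bar> \<le> A * S + A * \<bar>G\<bar> + w"
  proof -
    have "\<bar>A * G\<bar> \<le> A * \<bar>G\<bar>" using A0 by (simp add: abs_mult)
    then show ?thesis using mult_nonneg_nonneg[OF A0 S0] w0 by (simp add: abs_le_iff)
  qed
  have "\<bar>energy c m q G1 I chi a phi psi p\<bar>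
      \<le> chi^2 / (2 * m) * ((cmod (tD I q chi phi psi p))^2 / c^2) + m * c^2 / 2 * (A * S + A * \<bar>G\<bar> + w)"
    unfolding expand using potential m c
    by (intro order_trans[OF abs_triangle_ineq] add_mono) (auto simp: abs_mult)
  also have "\<dots> \<le> m * c^2 * (A * (D / c^2)) + (q * C)^2 / (m * c^2) * w + m * c^2 / 2 * (A * S + A * \<bar>G\<bar> + w)"
    using kinetic_term_le[where phi=phi and p=p and I=I and q=q and psi=psi, OF chi m c phi]
    unfolding A_def D_def w_def by linarith
  also have "\<dots> \<le> (m * c^2 + (q * C)^2 / (m * c^2)) * (A * (D / c^2) + A * S + A * \<bar>G\<bar> + w)"
  proof -
    have key: "k * x + l * w + k / 2 * (y + z + w) \<le> (k + l) * (x + y + z + w)"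
      if "0 \<le> k" "0 \<le> l" "0 \<le> x" "0 \<le> y" "0 \<le> z" "0 \<le> w" for k l x y z w :: real
    proof -
      have "0 \<le> k / 2 * (y + z + w) + l * (x + y + z)" using that by simp
      then show ?thesis by (simp add: ring_distribs)
    qed
    show ?thesis by (rule key) (use A0 S0 D0 w0 m c in simp_all)
  qed
  also have "\<dots> = (m * c^2 + (q * C)^2 / (m * c^2)) * control_density c I (chi / (m * c)) a G1 psi p"
    by (simp add: control_density_def grad0_sq_def A_def D_def S_def G_def w_def power_divide distrib_left)
  finally show ?thesis .
qed

lemma continuous_G1_norm_sq:
  assumes "admissible_G1 G1"
  shows "continuous_on UNIV (\<lambda>w::complex. G1 ((cmod w)^2))"
proof -
  obtain D where "\<And>z. ((\<lambda>w. G1 ((cmod w)^2)) has_derivative D z) (at z)"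
    using assms unfolding admissible_G1_def
    by (metis field_sum_of_halves half_gt_zero_iff less_add_same_cancel1 zero_less_one)
  then show ?thesis
    by (auto simp: continuous_on_eq_continuous_at intro: has_derivative_continuous)
qed

lemma continuous_on_Ga_norm_sq:
  assumes "admissible_G1 G1" "0 < a" "continuous_on K h"
  shows "continuous_on K (\<lambda>x. Ga a G1 ((cmod (h x))^2))"
proof -
  have "Ga a G1 ((cmod (h x))^2) = G1 ((cmod (of_real (sqrt (a^3)) * h x))^2) / a^5" for x
    using assms(2) by (simp add: Ga_def norm_mult power_mult_distrib)
  moreover have "continuous_on K (\<lambda>x. G1 ((cmod (of_real (sqrt (a^3)) * h x))^2))"
    by (rule continuous_on_compose2[OF continuous_G1_norm_sq[OF assms(1)]])
       (auto intro!: continuous_intros assms(3))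
  ultimately show ?thesis
    using assms(2) by (simp add: continuous_on_divide)
qed

lemma dx_eq_dd: "dx i F p = dd F (0, axis i 1) p"
  unfolding dx_def dd_def by (cases p) (simp add: scaleR_prod_def)

lemma dt_eq_dd:
  fixes F :: "pt \<Rightarrow> 'b::real_normed_vector"
  assumes "Tm < Tp" "t \<in> {Tm..Tp}"
    and diff: "(\<lambda>s. F ((t, x) + s *\<^sub>R (1, 0))) differentiable (at 0)"
  shows "dt {Tm..Tp} F (t, x) = dd F (1, 0) (t, x)"
proof -
  have "((\<lambda>s. F ((t, x) + s *\<^sub>R (1, 0))) has_vector_derivative dd F (1, 0) (t, x)) (at ((\<lambda>s. s - t) t))"
    using diff unfolding dd_def by (simp add: vector_derivative_works)
  from vector_diff_chain_at[OF has_vector_derivative_diff[OF has_vector_derivative_id has_vector_derivative_const] this]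
  have "((\<lambda>s. F (s, x)) has_vector_derivative dd F (1, 0) (t, x)) (at t)"
    by (simp add: o_def)
  then show ?thesis
    unfolding dt_def using assms(1,2)
    by (auto intro: vector_derivative_within_cbox[of Tm Tp t, unfolded box_real] has_vector_derivative_at_within)
qed

lemma continuous_on_slice:
  fixes F :: "pt \<Rightarrow> 'b::real_normed_vector"
  assumes "C2_set S F" and "Tm < Tp" "t \<in> {Tm..Tp}" and "\<And>x. x \<in> K \<Longrightarrow> (t, x) \<in> S"
  shows "continuous_on K (\<lambda>x. F (t, x))"
    and "continuous_on K (\<lambda>x. dt {Tm..Tp} F (t, x))"
    and "continuous_on K (\<lambda>x. dx i F (t, x))"
proof -
  obtain U where U: "S \<subseteq> U" "C2_on U F" using assms(1) unfolding C2_set_def by blast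
  have slice: "continuous_on K (\<lambda>x. G (t, x))" if "continuous_on U G" for G :: "pt \<Rightarrow> 'b"
    using that U(1) assms(4) by (auto intro!: continuous_on_compose2[OF that] continuous_intros)
  have e1: "(1, 0) \<in> (Basis :: pt set)" and ei: "(0, axis i 1) \<in> (Basis :: pt set)"
    by (simp_all add: Basis_prod_def axis_in_Basis_iff)
  show "continuous_on K (\<lambda>x. F (t, x))"
    using U(2) by (intro slice) (simp add: C2_on_def)
  show "continuous_on K (\<lambda>x. dx i F (t, x))"
    unfolding dx_eq_dd using U(2) ei by (intro slice) (simp add: C2_on_def)
  have "continuous_on K (\<lambda>x. dd F (1, 0) (t, x))"
    using U(2) e1 by (intro slice) (simp add: C2_on_def)
  moreover have "dt {Tm..Tp} F (t, x) = dd F (1, 0) (t, x)" if "x \<in> K" for x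
    by (rule dt_eq_dd[OF assms(2,3)]) (use U that assms(4) e1 in \<open>auto simp only: C2_on_def\<close>)
  ultimately show "continuous_on K (\<lambda>x. dt {Tm..Tp} F (t, x))"
    by (simp add: continuous_on_eq)
qed

lemma continuous_on_densities_slice:
  assumes G1: "admissible_G1 G1" and "0 < a" "chi \<noteq> 0" "c \<noteq> 0"
    and psi: "C2_set S psi" and phi: "C2_set S phi"
    and T: "Tm < Tp" "t \<in> {Tm..Tp}" and K: "\<And>x. x \<in> K \<Longrightarrow> (t, x) \<in> S"
  shows "continuous_on K (\<lambda>x. energy c m q G1 {Tm..Tp} chi a phi psi (t, x))"
    and "continuous_on K (\<lambda>x. control_density c {Tm..Tp} aC a G1 psi (t, x))"
proof -
  note psi_slice = continuous_on_slice[OF psi T K]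
  note Ga_slice = continuous_on_Ga_norm_sq[OF G1 \<open>0 < a\<close> psi_slice(1)]
  show "continuous_on K (\<lambda>x. energy c m q G1 {Tm..Tp} chi a phi psi (t, x))"
    unfolding energy_def tD_def using \<open>chi \<noteq> 0\<close> \<open>c \<noteq> 0\<close>
    by (intro continuous_intros psi_slice Ga_slice continuous_on_slice(1)[OF phi T K]) auto
  show "continuous_on K (\<lambda>x. control_density c {Tm..Tp} aC a G1 psi (t, x))"
    unfolding control_density_def grad0_sq_def using \<open>c \<noteq> 0\<close>
    by (intro continuous_intros psi_slice Ga_slice) auto
qed

theorem lemma2:
  fixes c m q C :: real
    and G1 :: "real \<Rightarrow> real"
    and Tm Tp :: real
    and rhat :: "real \<Rightarrow> real^3"
    and R a chi :: "nat \<Rightarrow> real"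
    and phi :: "nat \<Rightarrow> pt \<Rightarrow> real"
    and f0 :: "real \<Rightarrow> real" and g :: "real \<Rightarrow> real^3"
    and psi :: "nat \<Rightarrow> pt \<Rightarrow> complex"
    and c0 t0 :: real and n0 :: nat
  defines "I \<equiv> {Tm..Tp}"
    and "Om \<equiv> (\<lambda>n t. cball (rhat t) (R n))"
    and "OmH \<equiv> (\<lambda>n. {(t, x). t \<in> {Tm..Tp} \<and> x \<in> cball (rhat t) (R n)})"
    and "phi_inf \<equiv> (\<lambda>p::pt. f0 (fst p) + (snd p - rhat (fst p)) \<bullet> g (fst p))"
    and "aC \<equiv> (\<lambda>n. chi n / (m * c))"
    and "E \<equiv> (\<lambda>n. energy c m q G1 {Tm..Tp} (chi n) (a n) (phi n) (psi n))"
    and "Ebar \<equiv> (\<lambda>n t. integral (cball (rhat t) (R n)) (\<lambda>x. energy c m q G1 {Tm..Tp} (chi n) (a n) (phi n) (psi n) (t, x)))"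
    and "dens \<equiv> (\<lambda>n p. (chi n / (m * c))^2 * grad0_sq c {Tm..Tp} (psi n) p
                        + (chi n / (m * c))^2 * \<bar>Ga (a n) G1 ((cmod (psi n p))^2)\<bar>
                        + (cmod (psi n p))^2)"
  assumes c_pos: "c > 0" and m_pos: "m > 0"
    and G1_adm: "admissible_G1 G1"
    and T_lt: "Tm < Tp"
    and rhat_C2: "\<exists>r1 r2. (\<forall>t\<in>I. (rhat has_vector_derivative r1 t) (at t within I)
                            \<and> (r1 has_vector_derivative r2 t) (at t within I))
                         \<and> continuous_on I r2
                         \<and> (\<forall>t\<in>I. norm (r1 t) \<le> C \<and> norm (r2 t) \<le> C)"
    and R_pos: "\<forall>n. R n > 0" and R_lim: "R \<longlonglongrightarrow> 0"
    and a_pos: "\<forall>n. a n > 0" and a_lim: "a \<longlonglongrightarrow> 0"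
    and chi_pos: "\<forall>n. chi n > 0" and chi_lim: "chi \<longlonglongrightarrow> 0"
    and aC_a: "\<forall>n. aC n / a n \<le> C"
    and R_a: "filterlim (\<lambda>n. R n / a n) at_top sequentially"
    and phi_C2: "\<forall>n. C2_set (OmH n) (phi n)"
    and phi_bd: "\<forall>n. \<forall>p\<in>OmH n. \<bar>phi n p\<bar> + grad0_norm c I (phi n) p \<le> C"
    and f0_diff: "\<forall>t\<in>I. f0 differentiable (at t within I)"
    and g_diff: "\<forall>t\<in>I. g differentiable (at t within I)"
    and phi_inf_bd: "\<forall>t\<in>I. \<bar>f0 t\<bar> \<le> C \<and> norm (g t) \<le> C
                       \<and> norm (vector_derivative g (at t within I)) \<le> C"
    and phi_conv: "\<forall>\<epsilon>>0. \<forall>\<^sub>F n in sequentially. \<forall>p\<in>OmH n.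
                      \<bar>phi n p - phi_inf p\<bar> + grad0_norm c I (\<lambda>p. phi n p - phi_inf p) p \<le> \<epsilon>"
    and psi_C2: "\<forall>n. C2_set (OmH n) (psi n)"
    and psi_KG: "\<forall>n. \<forall>p\<in>OmH n. KG_lhs c m q G1 I (chi n) (a n) (phi n) (psi n) p = 0"
    and cond_i: "\<forall>n. \<forall>t\<in>I. integral (Om n t) (\<lambda>x. dens n (t, x)) \<le> C"
    and cond_ii: "\<forall>\<epsilon>>0. \<forall>\<^sub>F n in sequentially. \<forall>t\<in>I.
                     sphere_integral (rhat t) (R n) (\<lambda>x. dens n (t, x)) \<le> \<epsilon>"
    and c0_pos: "c0 > 0"
    and cond_iii: "\<forall>n\<ge>n0. \<forall>t\<in>I. Ebar n t \<ge> c0"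
    and t0_in: "t0 \<in> I" and cond_iv: "convergent (\<lambda>n. Ebar n t0)"
  shows "uniform_limit I
           (\<lambda>n t. (1 / Ebar n t) *\<^sub>R integral (Om n t) (\<lambda>x. E n (t, x) *\<^sub>R x))
           rhat sequentially"
proof -
  define K where "K = m * c^2 + (q * C)^2 / (m * c^2)"
  have K_nonneg: "0 \<le> K" using m_pos c_pos by (simp add: K_def)
  have dens_eq: "dens n = control_density c I (aC n) (a n) G1 (psi n)" for n
    by (simp add: dens_def control_density_def aC_def I_def fun_eq_iff)
  have in_OmH: "(t, x) \<in> OmH n" if "t \<in> I" "x \<in> Om n t" for n t x
    using that by (simp add: OmH_def Om_def I_def)
  have E_le: "\<bar>E n (t, x)\<bar> \<le> K * dens n (t, x)" if "t \<in> I" "x \<in> Om n t" for n t x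
  proof -
    have "0 \<le> grad0_norm c I (phi n) (t, x)"
      by (simp add: grad0_norm_def grad0_sq_def sum_nonneg)
    then have "\<bar>phi n (t, x)\<bar> \<le> C"
      using phi_bd in_OmH[OF that] by fastforce
    then show ?thesis
      unfolding E_def dens_eq K_def aC_def I_def
      by (rule abs_energy_le_control_density[OF chi_pos[rule_format] m_pos c_pos])
  qed
  have continuous: "continuous_on (Om n t) (\<lambda>x. E n (t, x)) \<and> continuous_on (Om n t) (\<lambda>x. dens n (t, x))"
    if "t \<in> I" for n t
  proof -
    have "chi n \<noteq> 0" using chi_pos by (metis less_irrefl)
    moreover have "c \<noteq> 0" using c_pos by simp
    ultimately show ?thesis
      using continuous_on_densities_slice[OF G1_adm a_pos[rule_format] _ _ psi_C2[rule_format]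
        phi_C2[rule_format] T_lt _ in_OmH] that
      unfolding E_def dens_eq I_def by simp
  qed
  have "dist ((1 / Ebar n t) *\<^sub>R integral (Om n t) (\<lambda>x. E n (t, x) *\<^sub>R x)) (rhat t) \<le> K * C / c0 * R n"
    if "n \<ge> n0" "t \<in> I" for n t
  proof -
    have compact: "compact (Om n t)" by (simp add: Om_def)
    have "integral (Om n t) (\<lambda>x. K * dens n (t, x)) \<le> K * C"
      using cond_i that(2) K_nonneg by (simp add: mult_left_mono)
    then have "dist ((1 / Ebar n t) *\<^sub>R integral (Om n t) (\<lambda>x. E n (t, x) *\<^sub>R x)) (rhat t) \<le> R n * (K * C) / c0"
      using continuous[OF that(2)] cond_iii that E_le[OF that(2)] R_pos c0_pos
      unfolding Ebar_def E_def Om_def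
      by (intro dist_weighted_mean_le[where w="\<lambda>x. K * dens n (t, x)"]
          continuous_on_compact_integrable[OF compact[unfolded Om_def]] continuous_intros)
        (auto simp: dist_commute less_imp_le)
    then show ?thesis by (simp add: field_simps)
  qed
  then show ?thesis
    by (intro uniform_limit_of_dist_le_null[where M="K * C / c0", OF _ R_lim]
        eventually_mono[OF eventually_ge_at_top[of n0]]) auto
qed

end
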